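(* For all $g\in L^2(V)$, $\|\mathcal{L}g\|_{L^2(V)}^2=\langle g,\mathcal{L}^2g\rangle\le\|g\|_{L^2(V)}^2$.
   Context: Setting: $V\subset\mathbb{R}^3$ is a bounded convex domain. The total cross-section $\sigma$ is a function on $V$ with $0<\sigma_{\min}\le\sigma({\bf r})\le\sigma_{\max}$ for all ${\bf r}\in V$. The optical path length is $\tau({\bf r},{\bf r}')=\int_{l({\bf r},{\bf r}')}\sigma({\bf z})\,\mathrm{d}{\bf z}$, the integral of $\sigma$ along the line segment $l({\bf r},{\bf r}')$ joining ${\bf r}$ and ${\bf r}'$. The integral operator $\mathcal{K}$ is $(\mathcal{K}v)({\bf r})=\int_V k({\bf r},{\bf r}')v({\bf r}')\,\mathrm{d}{\bf r}'$ with kernel $k({\bf r},{\bf r}')=\dfrac{\exp(-\tau({\bf r},{\bf r}'))}{4\pi\|{\bf r}-{\bf r}'\|_2^2}$. $\mathcal{L}:=\sigma^{1/2}\mathcal{K}\sigma^{1/2}$, i.e. $\mathcal{L}g=\sigma^{1/2}\,\mathcal{K}(\sigma^{1/2}g)$. $\langle\cdot,\cdot\rangle$ denotes the $L^2(V)$ inner product (real-valued functions). *)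

theory Defs
  imports "HOL-Analysis.Analysis"
begin

definition optical_path :: "(real^3 \<Rightarrow> real) \<Rightarrow> real^3 \<Rightarrow> real^3 \<Rightarrow> real" where
  "optical_path \<sigma> r r' = norm (r - r') * (LINT t:{0..1}|lborel. \<sigma> (r + t *\<^sub>R (r' - r)))"

definition transport_kernel :: "(real^3 \<Rightarrow> real) \<Rightarrow> real^3 \<Rightarrow> real^3 \<Rightarrow> real" where
  "transport_kernel \<sigma> r r' = exp (- optical_path \<sigma> r r') / (4 * pi * (norm (r - r'))\<^sup>2)"

definition K_op :: "(real^3) set \<Rightarrow> (real^3 \<Rightarrow> real) \<Rightarrow> (real^3 \<Rightarrow> real) \<Rightarrow> real^3 \<Rightarrow> real" where
  "K_op V \<sigma> v r = (LINT r':V|lebesgue. transport_kernel \<sigma> r r' * v r')"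

definition L_op :: "(real^3) set \<Rightarrow> (real^3 \<Rightarrow> real) \<Rightarrow> (real^3 \<Rightarrow> real) \<Rightarrow> real^3 \<Rightarrow> real" where
  "L_op V \<sigma> g r = sqrt (\<sigma> r) * K_op V \<sigma> (\<lambda>r'. sqrt (\<sigma> r') * g r') r"

definition L2_inner :: "(real^3) set \<Rightarrow> (real^3 \<Rightarrow> real) \<Rightarrow> (real^3 \<Rightarrow> real) \<Rightarrow> real" where
  "L2_inner V f g = (LINT r:V|lebesgue. f r * g r)"

definition L2_norm :: "(real^3) set \<Rightarrow> (real^3 \<Rightarrow> real) \<Rightarrow> real" where
  "L2_norm V f = sqrt (LINT r:V|lebesgue. (f r)\<^sup>2)"

definition in_L2 :: "(real^3) set \<Rightarrow> (real^3 \<Rightarrow> real) \<Rightarrow> bool" where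
  "in_L2 V g \<longleftrightarrow> g \<in> borel_measurable (restrict_space lebesgue V) \<and>
                 set_integrable lebesgue V (\<lambda>r. (g r)\<^sup>2)"

end

theory Submission
  imports Defs "HOL-Analysis.Analysis" "HOL-Real_Asymp.Real_Asymp"
begin

text \<open>\<open>L\<close> is the integral operator with the symmetric nonnegative kernel
  \<open>sqrt (\<sigma> r) k(r, r') sqrt (\<sigma> r')\<close>. By Schur's test (Cauchy--Schwarz and Tonelli) its
  \<open>L\<^sup>2\<close> norm is at most \<open>1\<close> once every row integral \<open>\<integral> k(r, r') \<sigma>(r') dr'\<close> is at most \<open>1\<close>,
  and Fubini gives \<open>\<parallel>L g\<parallel>\<^sup>2 = \<langle>g, L\<^sup>2 g\<rangle>\<close>. The row bound is read off in polar coordinates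
  around \<open>r\<close>: along each ray the radial integrand is \<open>\<sigma>(s) exp (- \<tau>(s))\<close>, where the optical
  depth \<open>\<tau>\<close> has derivative \<open>\<sigma>\<close>, so the radial integral is \<open>1 - exp (- \<tau>(\<infinity>)) \<le> 1\<close>, and the
  factor \<open>1 / (4 pi)\<close> is the normalised solid angle. Outside \<open>V\<close> the cross-section is
  extended by zero; convexity of \<open>V\<close> keeps every segment between points of \<open>V\<close> inside \<open>V\<close>.\<close>

section \<open>Schur's test for symmetric kernels\<close>

locale schur_kernel = sigma_finite_measure M for M :: "'a measure" +
  fixes k :: "'a \<Rightarrow> 'a \<Rightarrow> real" and w :: "'a \<Rightarrow> real"
  assumes kernel_measurable [measurable]: "(\<lambda>(x, y). k x y) \<in> borel_measurable (M \<Otimes>\<^sub>M M)"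
    and weight_measurable [measurable]: "w \<in> borel_measurable M"
    and kernel_nonneg: "0 \<le> k x y"
    and weight_nonneg: "0 \<le> w x"
    and kernel_commute: "k x y = k y x"
    and row_bound: "(\<integral>\<^sup>+ y. ennreal (k x y * w y) \<partial>M) \<le> 1"
begin

interpretation P: pair_sigma_finite M M ..

definition schur_op :: "('a \<Rightarrow> real) \<Rightarrow> 'a \<Rightarrow> real" where
  "schur_op g x = sqrt (w x) * (\<integral> y. k x y * (sqrt (w y) * g y) \<partial>M)"

lemma borel_measurable_schur_op [measurable]:
  assumes [measurable]: "g \<in> borel_measurable M"
  shows "schur_op g \<in> borel_measurable M"
  unfolding schur_op_def[abs_def] by measurable

lemma nn_integral_row_weighted:
  assumes "f \<in> borel_measurable M"
  shows "(\<integral>\<^sup>+ x. (\<integral>\<^sup>+ y. ennreal (k x y * w y * (f x)\<^sup>2) \<partial>M) \<partial>M) \<le> (\<integral>\<^sup>+ x. ennreal ((f x)\<^sup>2) \<partial>M)"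
proof -
  have "(\<integral>\<^sup>+ x. (\<integral>\<^sup>+ y. ennreal (k x y * w y * (f x)\<^sup>2) \<partial>M) \<partial>M)
      = (\<integral>\<^sup>+ x. ennreal ((f x)\<^sup>2) * (\<integral>\<^sup>+ y. ennreal (k x y * w y) \<partial>M) \<partial>M)"
    using kernel_nonneg weight_nonneg assms
    by (intro nn_integral_cong) (simp add: nn_integral_cmult[symmetric] ennreal_mult[symmetric] mult_ac)
  also have "\<dots> \<le> (\<integral>\<^sup>+ x. ennreal ((f x)\<^sup>2) * 1 \<partial>M)"
    by (intro nn_integral_mono mult_left_mono row_bound) auto
  finally show ?thesis by simp
qed

lemma nn_integral_column_weighted:
  assumes [measurable]: "f \<in> borel_measurable M"
  shows "(\<integral>\<^sup>+ x. (\<integral>\<^sup>+ y. ennreal (k x y * w x * (f y)\<^sup>2) \<partial>M) \<partial>M) \<le> (\<integral>\<^sup>+ y. ennreal ((f y)\<^sup>2) \<partial>M)"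
proof -
  have "(\<integral>\<^sup>+ x. (\<integral>\<^sup>+ y. ennreal (k x y * w x * (f y)\<^sup>2) \<partial>M) \<partial>M)
      = (\<integral>\<^sup>+ y. (\<integral>\<^sup>+ x. ennreal (k y x * w x * (f y)\<^sup>2) \<partial>M) \<partial>M)"
    by (subst P.Fubini') (simp_all add: kernel_commute)
  also have "\<dots> \<le> (\<integral>\<^sup>+ y. ennreal ((f y)\<^sup>2) \<partial>M)"
    by (rule nn_integral_row_weighted) (rule assms)
  finally show ?thesis .
qed

lemma schur_op_square_le:
  assumes [measurable]: "g \<in> borel_measurable M" and x: "x \<in> space M"
  shows "ennreal ((schur_op g x)\<^sup>2) \<le> (\<integral>\<^sup>+ y. ennreal (k x y * w x * (g y)\<^sup>2) \<partial>M)"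
proof -
  have [measurable]: "k x \<in> borel_measurable M"
    using measurable_compose[OF measurable_Pair1'[OF x] kernel_measurable] by simp
  let ?f = "\<lambda>y. k x y * (sqrt (w y) * g y)"
  have "ennreal \<bar>\<integral> y. ?f y \<partial>M\<bar> \<le> (\<integral>\<^sup>+ y. ennreal \<bar>?f y\<bar> \<partial>M)"
    using integral_norm_bound_ennreal[of M ?f] by (cases "integrable M ?f") (auto simp: not_integrable_integral_eq)
  also have "\<dots> = (\<integral>\<^sup>+ y. ennreal (sqrt (k x y * w y)) * ennreal (sqrt (k x y * (g y)\<^sup>2)) \<partial>M)"
    using kernel_nonneg[of x] weight_nonneg
    by (intro nn_integral_cong) (auto simp: abs_mult real_sqrt_mult ennreal_mult[symmetric] real_sqrt_abs)
  finally have "(ennreal \<bar>\<integral> y. ?f y \<partial>M\<bar>)\<^sup>2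
      \<le> (\<integral>\<^sup>+ y. ennreal (sqrt (k x y * w y)) * ennreal (sqrt (k x y * (g y)\<^sup>2)) \<partial>M)\<^sup>2"
    by (intro power_mono) auto
  also have "\<dots> \<le> (\<integral>\<^sup>+ y. (ennreal (sqrt (k x y * w y)))\<^sup>2 \<partial>M) * (\<integral>\<^sup>+ y. (ennreal (sqrt (k x y * (g y)\<^sup>2)))\<^sup>2 \<partial>M)"
    by (rule Cauchy_Schwarz_nn_integral) measurable
  also have "\<dots> = (\<integral>\<^sup>+ y. ennreal (k x y * w y) \<partial>M) * (\<integral>\<^sup>+ y. ennreal (k x y * (g y)\<^sup>2) \<partial>M)"
    using kernel_nonneg weight_nonneg by (intro arg_cong2[where f="(*)"] nn_integral_cong) (simp_all add: ennreal_power)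
  also have "\<dots> \<le> (\<integral>\<^sup>+ y. ennreal (k x y * (g y)\<^sup>2) \<partial>M)"
    using mult_right_mono[OF row_bound[of x]] by simp
  finally have CS: "(ennreal \<bar>\<integral> y. ?f y \<partial>M\<bar>)\<^sup>2 \<le> (\<integral>\<^sup>+ y. ennreal (k x y * (g y)\<^sup>2) \<partial>M)" .
  have "ennreal ((schur_op g x)\<^sup>2) = ennreal (w x) * (ennreal \<bar>\<integral> y. ?f y \<partial>M\<bar>)\<^sup>2"
    unfolding schur_op_def using weight_nonneg[of x]
    by (simp add: power_mult_distrib ennreal_mult ennreal_power)
  also have "\<dots> \<le> ennreal (w x) * (\<integral>\<^sup>+ y. ennreal (k x y * (g y)\<^sup>2) \<partial>M)"
    using CS by (rule mult_left_mono) simp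
  also have "\<dots> = (\<integral>\<^sup>+ y. ennreal (k x y * w x * (g y)\<^sup>2) \<partial>M)"
    using kernel_nonneg weight_nonneg[of x]
    by (simp add: nn_integral_cmult[symmetric] ennreal_mult[symmetric] mult_ac)
  finally show ?thesis .
qed

lemma nn_integral_schur_op_square_le:
  assumes [measurable]: "g \<in> borel_measurable M"
  shows "(\<integral>\<^sup>+ x. ennreal ((schur_op g x)\<^sup>2) \<partial>M) \<le> (\<integral>\<^sup>+ x. ennreal ((g x)\<^sup>2) \<partial>M)"
proof -
  have "(\<integral>\<^sup>+ x. ennreal ((schur_op g x)\<^sup>2) \<partial>M) \<le> (\<integral>\<^sup>+ x. (\<integral>\<^sup>+ y. ennreal (k x y * w x * (g y)\<^sup>2) \<partial>M) \<partial>M)"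
    by (intro nn_integral_mono schur_op_square_le) simp_all
  also have "\<dots> \<le> (\<integral>\<^sup>+ x. ennreal ((g x)\<^sup>2) \<partial>M)"
    by (rule nn_integral_column_weighted) (rule assms)
  finally show ?thesis .
qed

lemma
  assumes [measurable]: "g \<in> borel_measurable M" and g: "integrable M (\<lambda>x. (g x)\<^sup>2)"
  shows integrable_schur_op_square: "integrable M (\<lambda>x. (schur_op g x)\<^sup>2)"
    and integral_schur_op_square_le: "(\<integral> x. (schur_op g x)\<^sup>2 \<partial>M) \<le> (\<integral> x. (g x)\<^sup>2 \<partial>M)"
proof -
  have "(\<integral>\<^sup>+ x. ennreal ((g x)\<^sup>2) \<partial>M) < \<infinity>"
    using g unfolding integrable_iff_bounded by simp
  then show "integrable M (\<lambda>x. (schur_op g x)\<^sup>2)"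
    using nn_integral_schur_op_square_le[of g] unfolding integrable_iff_bounded by simp
  show "(\<integral> x. (schur_op g x)\<^sup>2 \<partial>M) \<le> (\<integral> x. (g x)\<^sup>2 \<partial>M)"
    using nn_integral_schur_op_square_le[of g] \<open>(\<integral>\<^sup>+ x. ennreal ((g x)\<^sup>2) \<partial>M) < \<infinity>\<close>
    by (subst (1 2) integral_eq_nn_integral) (auto simp: enn2real_mono)
qed

lemma integrable_schur_pairing:
  assumes [measurable]: "f \<in> borel_measurable M" "g \<in> borel_measurable M"
    and f: "integrable M (\<lambda>x. (f x)\<^sup>2)" and g: "integrable M (\<lambda>x. (g x)\<^sup>2)"
  shows "integrable (M \<Otimes>\<^sub>M M) (\<lambda>(x, y). f x * sqrt (w x) * k x y * (sqrt (w y) * g y))"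
proof -
  let ?B = "\<lambda>x y. k x y * w y * (f x)\<^sup>2 + k x y * w x * (g y)\<^sup>2"
  have bound: "\<bar>f x * sqrt (w x) * k x y * (sqrt (w y) * g y)\<bar> \<le> ?B x y" for x y
  proof -
    have "2 * (sqrt (w y) * \<bar>f x\<bar>) * (sqrt (w x) * \<bar>g y\<bar>) \<le> (sqrt (w y) * \<bar>f x\<bar>)\<^sup>2 + (sqrt (w x) * \<bar>g y\<bar>)\<^sup>2"
      by (rule sum_squares_bound)
    also have "\<dots> = w y * (f x)\<^sup>2 + w x * (g y)\<^sup>2"
      using weight_nonneg[of x] weight_nonneg[of y] by (simp add: power_mult_distrib)
    finally have "2 * (sqrt (w y) * \<bar>f x\<bar>) * (sqrt (w x) * \<bar>g y\<bar>) \<le> w y * (f x)\<^sup>2 + w x * (g y)\<^sup>2" .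
    moreover have "0 \<le> (sqrt (w y) * \<bar>f x\<bar>) * (sqrt (w x) * \<bar>g y\<bar>)"
      using weight_nonneg[of x] weight_nonneg[of y] by simp
    ultimately have "(sqrt (w y) * \<bar>f x\<bar>) * (sqrt (w x) * \<bar>g y\<bar>) \<le> w y * (f x)\<^sup>2 + w x * (g y)\<^sup>2"
      by linarith
    from mult_left_mono[OF this kernel_nonneg[of x y]] show ?thesis
      using kernel_nonneg[of x y] weight_nonneg[of x] weight_nonneg[of y]
      by (simp add: abs_mult algebra_simps)
  qed
  have "(\<integral>\<^sup>+ z. ennreal (?B (fst z) (snd z)) \<partial>(M \<Otimes>\<^sub>M M))
      = (\<integral>\<^sup>+ x. (\<integral>\<^sup>+ y. ennreal (k x y * w y * (f x)\<^sup>2) \<partial>M) \<partial>M)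
        + (\<integral>\<^sup>+ x. (\<integral>\<^sup>+ y. ennreal (k x y * w x * (g y)\<^sup>2) \<partial>M) \<partial>M)"
    using kernel_nonneg weight_nonneg
      nn_integral_fst[where f="\<lambda>z. ennreal (k (fst z) (snd z) * w (snd z) * (f (fst z))\<^sup>2)"]
      nn_integral_fst[where f="\<lambda>z. ennreal (k (fst z) (snd z) * w (fst z) * (g (snd z))\<^sup>2)"]
    by (simp add: nn_integral_add)
  also have "\<dots> < \<infinity>"
    using nn_integral_row_weighted[of f] nn_integral_column_weighted[of g] f g
    unfolding integrable_iff_bounded by (simp add: order_le_less_trans)
  finally have "(\<integral>\<^sup>+ z. ennreal (?B (fst z) (snd z)) \<partial>(M \<Otimes>\<^sub>M M)) < \<infinity>" .
  moreover have "(\<integral>\<^sup>+ z. ennreal \<bar>f (fst z) * sqrt (w (fst z)) * k (fst z) (snd z) * (sqrt (w (snd z)) * g (snd z))\<bar> \<partial>(M \<Otimes>\<^sub>M M))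
      \<le> (\<integral>\<^sup>+ z. ennreal (?B (fst z) (snd z)) \<partial>(M \<Otimes>\<^sub>M M))"
    by (intro nn_integral_mono ennreal_leI bound)
  moreover have "(\<lambda>(x, y). f x * sqrt (w x) * k x y * (sqrt (w y) * g y)) \<in> borel_measurable (M \<Otimes>\<^sub>M M)"
    by measurable
  ultimately show ?thesis
    unfolding integrable_iff_bounded case_prod_beta by simp
qed

lemma integral_schur_op_commute:
  assumes [measurable]: "f \<in> borel_measurable M" "g \<in> borel_measurable M"
    and f: "integrable M (\<lambda>x. (f x)\<^sup>2)" and g: "integrable M (\<lambda>x. (g x)\<^sup>2)"
  shows "(\<integral> x. f x * schur_op g x \<partial>M) = (\<integral> x. schur_op f x * g x \<partial>M)"
proof -
  let ?\<Phi> = "\<lambda>x y. f x * sqrt (w x) * k x y * (sqrt (w y) * g y)"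
  have "(\<integral> x. f x * schur_op g x \<partial>M) = (\<integral> x. (\<integral> y. ?\<Phi> x y \<partial>M) \<partial>M)"
    unfolding schur_op_def by (simp add: mult.assoc)
  also have "\<dots> = (\<integral> y. (\<integral> x. ?\<Phi> x y \<partial>M) \<partial>M)"
    using P.Fubini_integral[OF integrable_schur_pairing[OF assms]] by simp
  also have "\<dots> = (\<integral> y. schur_op f y * g y \<partial>M)"
  proof (intro Bochner_Integration.integral_cong refl)
    fix y
    have "(\<integral> x. ?\<Phi> x y \<partial>M) = (\<integral> x. (g y * sqrt (w y)) * (k y x * (sqrt (w x) * f x)) \<partial>M)"
      by (intro Bochner_Integration.integral_cong) (simp_all add: kernel_commute mult_ac)
    also have "\<dots> = (g y * sqrt (w y)) * (\<integral> x. k y x * (sqrt (w x) * f x) \<partial>M)"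
      by (rule integral_mult_right_zero)
    finally show "(\<integral> x. ?\<Phi> x y \<partial>M) = schur_op f y * g y"
      unfolding schur_op_def by (simp only: mult_ac)
  qed
  finally show ?thesis .
qed

lemma integral_schur_op_square:
  assumes [measurable]: "g \<in> borel_measurable M" and g: "integrable M (\<lambda>x. (g x)\<^sup>2)"
  shows "(\<integral> x. (schur_op g x)\<^sup>2 \<partial>M) = (\<integral> x. g x * schur_op (schur_op g) x \<partial>M)"
  using integral_schur_op_commute[OF borel_measurable_schur_op[OF assms(1)] assms(1)
      integrable_schur_op_square[OF assms] g]
  by (simp add: power2_eq_square mult.commute)

end

section \<open>Integrals along rays\<close>

lemma nn_integral_exponential_tail:
  fixes c a :: real
  assumes "0 < c"
  shows "(\<integral>\<^sup>+ u. ennreal (c * exp (- c * u)) * indicator {a..} u \<partial>lborel) = ennreal (exp (- c * a))"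
proof -
  have "(\<integral>\<^sup>+ u. ennreal (c * exp (- c * u)) * indicator {a..} u \<partial>lborel) = ennreal (0 - (- exp (- c * a)))"
  proof (rule nn_integral_FTC_atLeast)
    show "((\<lambda>u. - exp (- c * u)) \<longlongrightarrow> 0) at_top"
      using assms by real_asymp
  qed (use assms in \<open>auto intro!: derivative_eq_intros\<close>)
  then show ?thesis by simp
qed

lemma nn_integral_exponential_mean:
  fixes c :: real
  assumes "0 < c"
  shows "(\<integral>\<^sup>+ u. ennreal (c * exp (- c * u) * u) * indicator {0..} u \<partial>lborel) = ennreal (1 / c)"
proof -
  have "(\<integral>\<^sup>+ u. ennreal (c * exp (- c * u) * u) * indicator {0..} u \<partial>lborel)
      = ennreal (0 - (- (0 + 1 / c) * exp (- c * 0)))"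
  proof (rule nn_integral_FTC_atLeast)
    show "((\<lambda>u. - (u + 1 / c) * exp (- c * u)) \<longlongrightarrow> 0) at_top"
      using assms by real_asymp
  qed (use assms in \<open>auto intro!: derivative_eq_intros simp: field_simps\<close>)
  then show ?thesis by simp
qed

locale bounded_rate =
  fixes \<psi> :: "real \<Rightarrow> real" and B :: real
  assumes rate_measurable [measurable]: "\<psi> \<in> borel_measurable borel"
    and rate_nonneg: "0 \<le> \<psi> s"
    and rate_le: "\<psi> s \<le> B"
begin

definition primitive :: "real \<Rightarrow> real" where
  "primitive s = (LINT u:{0..s}|lborel. \<psi> u)"

lemma borel_measurable_primitive [measurable]: "primitive \<in> borel_measurable borel"
proof -
  have "(\<lambda>p::real \<times> real. (if 0 \<le> snd p \<and> snd p \<le> fst p then 1 else 0) * \<psi> (snd p))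
      \<in> borel_measurable (borel \<Otimes>\<^sub>M borel)"
    by measurable
  then have "(\<lambda>(s, u). indicator {0..s} u *\<^sub>R \<psi> u) \<in> borel_measurable (borel \<Otimes>\<^sub>M lborel)"
    by (subst measurable_cong_sets[OF sets_pair_measure_cong[OF refl sets_lborel] refl])
       (simp add: case_prod_beta indicator_def)
  then show ?thesis
    unfolding primitive_def[abs_def] set_lebesgue_integral_def
    by (rule lborel.borel_measurable_lebesgue_integral)
qed

lemma integrable_rate_on:
  assumes "A \<in> sets borel" "emeasure lborel A < \<infinity>"
  shows "integrable lborel (\<lambda>u. indicator A u * \<psi> u)"
proof (rule Bochner_Integration.integrable_bound)
  show "integrable lborel (\<lambda>u. B * indicator A u)"
    using assms by (intro integrable_mult_right integrable_real_indicator) auto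
  show "AE x in lborel. norm (indicator A x * \<psi> x) \<le> norm (B * indicator A x)"
    using rate_nonneg rate_le order_trans[OF rate_nonneg rate_le]
    by (auto split: split_indicator)
qed (use assms in measurable)

lemma primitive_eq: "primitive s = (\<integral> u. indicator {0..s} u * \<psi> u \<partial>lborel)"
  unfolding primitive_def set_lebesgue_integral_def by simp

lemma primitive_le_add:
  assumes "0 \<le> s" "s \<le> t"
  shows "primitive t \<le> primitive s + B * (t - s)"
proof -
  have "primitive t - primitive s = (\<integral> u. indicator {s<..t} u * \<psi> u \<partial>lborel)"
    unfolding primitive_eq using assms
    by (subst Bochner_Integration.integral_diff[symmetric])
       (auto intro!: integrable_rate_on Bochner_Integration.integral_cong split: split_indicator)
  also have "\<dots> \<le> (\<integral> u. B * indicator {s<..t} u \<partial>lborel)"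
    using assms rate_le
    by (intro integral_mono integrable_rate_on integrable_mult_right integrable_real_indicator)
       (auto split: split_indicator)
  also have "\<dots> = B * (t - s)"
    using assms by simp
  finally show ?thesis by simp
qed

lemma nn_integral_Ioc_le_primitive:
  "(\<integral>\<^sup>+ s. ennreal (\<psi> s) * indicator {0<..b} s \<partial>lborel) \<le> ennreal (primitive b)"
proof -
  have "(\<integral>\<^sup>+ s. ennreal (\<psi> s) * indicator {0<..b} s \<partial>lborel)
      \<le> (\<integral>\<^sup>+ s. ennreal (indicator {0..b} s * \<psi> s) \<partial>lborel)"
    by (intro nn_integral_mono) (auto split: split_indicator)
  also have "\<dots> = ennreal (primitive b)"
    unfolding primitive_eq using rate_nonneg
    by (intro nn_integral_eq_integral integrable_rate_on)
       (auto simp: emeasure_lborel_Icc_eq split: split_indicator)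
  finally show ?thesis .
qed

lemma nn_integral_bounded_sublevel_le:
  "(\<integral>\<^sup>+ s. ennreal (\<psi> s) * indicator {s. 0 < s \<and> s \<le> t \<and> primitive s \<le> u} s \<partial>lborel) \<le> ennreal u"
proof (cases "{s. 0 < s \<and> s \<le> t \<and> primitive s \<le> u} = {}")
  case False
  have B: "0 \<le> B"
    using order_trans[OF rate_nonneg rate_le] .
  define S where "S = {s. 0 \<le> s \<and> s \<le> t \<and> primitive s \<le> u}"
  define b where "b = Sup S"
  have S_ne: "S \<noteq> {}" and S_bdd: "bdd_above S"
    using False unfolding S_def by (auto intro: bdd_aboveI[of _ t])
  have le_b: "s \<le> b" if "s \<in> S" for s
    unfolding b_def using that S_bdd by (rule cSup_upper)
  have "primitive b \<le> u"
  proof (rule field_le_epsilon)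
    fix e :: real
    assume "0 < e"
    then obtain s where s: "s \<in> S" "b - e / (B + 1) < s"
      using less_cSup_iff[OF S_ne S_bdd, of "b - e / (B + 1)"] B unfolding b_def by auto
    have "primitive b \<le> primitive s + B * (b - s)"
      using primitive_le_add[of s b] s le_b unfolding S_def by auto
    also have "B * (b - s) \<le> B * (e / (B + 1))"
      using s B by (intro mult_left_mono) auto
    also have "B * (e / (B + 1)) \<le> e"
      using B \<open>0 < e\<close> by (simp add: field_simps)
    finally show "primitive b \<le> u + e"
      using s unfolding S_def by auto
  qed
  have "(\<integral>\<^sup>+ s. ennreal (\<psi> s) * indicator {s. 0 < s \<and> s \<le> t \<and> primitive s \<le> u} s \<partial>lborel)
      \<le> (\<integral>\<^sup>+ s. ennreal (\<psi> s) * indicator {0<..b} s \<partial>lborel)"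
    using le_b by (intro nn_integral_mono) (auto simp: S_def split: split_indicator)
  also have "\<dots> \<le> ennreal u"
    using nn_integral_Ioc_le_primitive \<open>primitive b \<le> u\<close> by (blast intro: order_trans ennreal_leI)
  finally show ?thesis .
qed simp

lemma nn_integral_sublevel_le:
  "(\<integral>\<^sup>+ s. ennreal (\<psi> s) * indicator {s. 0 < s \<and> primitive s \<le> u} s \<partial>lborel) \<le> ennreal u"
proof -
  let ?A = "\<lambda>n::nat. {s. 0 < s \<and> s \<le> real n \<and> primitive s \<le> u}"
  let ?N = "density lborel (\<lambda>s. ennreal (\<psi> s))"
  have "{s. 0 < s \<and> primitive s \<le> u} = (\<Union>n. ?A n)"
    using real_arch_simple by auto
  then have "(\<integral>\<^sup>+ s. ennreal (\<psi> s) * indicator {s. 0 < s \<and> primitive s \<le> u} s \<partial>lborel)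
      = emeasure ?N (\<Union>n. ?A n)"
    by (simp add: emeasure_density)
  also have "\<dots> = (SUP n. emeasure ?N (?A n))"
    by (rule SUP_emeasure_incseq[symmetric]) (auto simp: incseq_def intro: order_trans)
  also have "\<dots> \<le> ennreal u"
    using nn_integral_bounded_sublevel_le by (simp add: emeasure_density SUP_least)
  finally show ?thesis .
qed

text \<open>Writing \<open>exp (- c F s)\<close> as the tail integral of \<open>c exp (- c u)\<close> over \<open>u \<ge> F s\<close> and
  exchanging the order of integration avoids differentiating the merely Lipschitz
  primitive \<open>F\<close>.\<close>

lemma nn_integral_rate_exp_primitive_le:
  assumes c: "0 < c"
  shows "(\<integral>\<^sup>+ s. ennreal (\<psi> s * exp (- c * primitive s)) * indicator {0<..} s \<partial>lborel) \<le> ennreal (1 / c)"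
proof -
  have [measurable]: "Measurable.pred (borel \<Otimes>\<^sub>M borel) (\<lambda>x::real \<times> real. snd x \<in> {primitive (fst x)..})"
    unfolding atLeast_iff by measurable
  have "(\<integral>\<^sup>+ s. ennreal (\<psi> s * exp (- c * primitive s)) * indicator {0<..} s \<partial>lborel)
      = (\<integral>\<^sup>+ s. (\<integral>\<^sup>+ u. ennreal (\<psi> s) * indicator {0<..} s * (ennreal (c * exp (- c * u)) * indicator {primitive s..} u) \<partial>lborel) \<partial>lborel)"
  proof (intro nn_integral_cong)
    fix s
    have "ennreal (\<psi> s * exp (- c * primitive s)) * indicator {0<..} s
        = ennreal (\<psi> s) * indicator {0<..} s * ennreal (exp (- c * primitive s))"
      using rate_nonneg[of s] by (simp add: ennreal_mult mult_ac)
    also have "\<dots> = ennreal (\<psi> s) * indicator {0<..} s * (\<integral>\<^sup>+ u. ennreal (c * exp (- c * u)) * indicator {primitive s..} u \<partial>lborel)"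
      by (simp only: nn_integral_exponential_tail[OF c])
    also have "\<dots> = (\<integral>\<^sup>+ u. ennreal (\<psi> s) * indicator {0<..} s * (ennreal (c * exp (- c * u)) * indicator {primitive s..} u) \<partial>lborel)"
      by (rule nn_integral_cmult[symmetric]) measurable
    finally show "ennreal (\<psi> s * exp (- c * primitive s)) * indicator {0<..} s = \<dots>" .
  qed
  also have "\<dots> = (\<integral>\<^sup>+ u. (\<integral>\<^sup>+ s. ennreal (\<psi> s) * indicator {0<..} s * (ennreal (c * exp (- c * u)) * indicator {primitive s..} u) \<partial>lborel) \<partial>lborel)"
    by (rule lborel_pair.Fubini'[symmetric]) measurable
  also have "\<dots> = (\<integral>\<^sup>+ u. ennreal (c * exp (- c * u)) * (\<integral>\<^sup>+ s. ennreal (\<psi> s) * indicator {s. 0 < s \<and> primitive s \<le> u} s \<partial>lborel) \<partial>lborel)"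
    by (intro nn_integral_cong)
       (auto simp: nn_integral_cmult[symmetric] mult_ac intro!: nn_integral_cong split: split_indicator)
  also have "\<dots> \<le> (\<integral>\<^sup>+ u. ennreal (c * exp (- c * u)) * ennreal u \<partial>lborel)"
    by (intro nn_integral_mono mult_left_mono nn_integral_sublevel_le) auto
  also have "\<dots> = (\<integral>\<^sup>+ u. ennreal (c * exp (- c * u) * u) * indicator {0..} u \<partial>lborel)"
    using c by (intro nn_integral_cong) (auto simp: ennreal_mult ennreal_neg split: split_indicator)
  also have "\<dots> = ennreal (1 / c)"
    by (rule nn_integral_exponential_mean[OF c])
  finally show ?thesis .
qed

end

lemma nn_integral_lborel_scaleR:
  fixes f :: "'a::euclidean_space \<Rightarrow> ennreal" and c :: real
  assumes [measurable]: "f \<in> borel_measurable borel" and c: "0 < c"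
  shows "(\<integral>\<^sup>+ x. f x \<partial>lborel) = ennreal (c ^ DIM('a)) * (\<integral>\<^sup>+ y. f (c *\<^sub>R y) \<partial>lborel)"
proof -
  let ?D = "density (distr lborel borel (\<lambda>x. 0 + c *\<^sub>R x)) (\<lambda>_. \<bar>c\<bar> ^ DIM('a))"
  have "(lborel :: 'a measure) = ?D"
    using c by (intro lborel_affine) simp
  then have "(\<integral>\<^sup>+ x. f x \<partial>lborel) = (\<integral>\<^sup>+ x. f x \<partial>?D)"
    by (subst (1) \<open>lborel = ?D\<close>) (rule refl)
  also have "\<dots> = (\<integral>\<^sup>+ y. ennreal (\<bar>c\<bar> ^ DIM('a)) * f (0 + c *\<^sub>R y) \<partial>lborel)"
    by (simp add: nn_integral_density nn_integral_distr)
  also have "\<dots> = ennreal (c ^ DIM('a)) * (\<integral>\<^sup>+ y. f (c *\<^sub>R y) \<partial>lborel)"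
    using c by (subst nn_integral_cmult) auto
  finally show ?thesis .
qed

lemma nn_integral_inverse_over_half:
  fixes a :: real
  assumes "0 < a"
  shows "(\<integral>\<^sup>+ s. ennreal (1 / s) * indicator {a / 2..a} s \<partial>lborel) = ennreal (ln 2)"
proof -
  have "(\<integral>\<^sup>+ s. ennreal (1 / s) * indicator {a / 2..a} s \<partial>lborel) = ennreal (ln a - ln (a / 2))"
    by (rule nn_integral_FTC_Icc) (use assms in \<open>auto intro!: derivative_eq_intros\<close>)
  also have "ln a - ln (a / 2) = ln 2"
    using assms by (simp add: ln_div)
  finally show ?thesis .
qed

definition unit_shell :: "'a::real_normed_vector set" where
  "unit_shell = {y. 1 \<le> norm y \<and> norm y \<le> 2}"

lemma unit_shell_borel [measurable]: "(unit_shell :: 'a::euclidean_space set) \<in> sets borel"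
  unfolding unit_shell_def by measurable

lemma nn_integral_dilate_indicator:
  fixes f :: "'a::euclidean_space \<Rightarrow> ennreal"
  assumes [measurable]: "f \<in> borel_measurable borel" "A \<in> sets borel" and s: "0 < s"
  shows "(\<integral>\<^sup>+ y. indicator A y * f (s *\<^sub>R y) \<partial>lborel) * ennreal (s ^ (DIM('a) - 1))
       = ennreal (1 / s) * (\<integral>\<^sup>+ x. indicator A ((1 / s) *\<^sub>R x) * f x \<partial>lborel)"
proof -
  have "(\<integral>\<^sup>+ x. indicator A ((1 / s) *\<^sub>R x) * f x \<partial>lborel)
      = ennreal (s ^ DIM('a)) * (\<integral>\<^sup>+ y. indicator A y * f (s *\<^sub>R y) \<partial>lborel)"
    using nn_integral_lborel_scaleR[of "\<lambda>x. indicator A ((1 / s) *\<^sub>R x) * f x" s] s by simp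
  moreover have "ennreal (1 / s) * ennreal (s ^ DIM('a)) = ennreal (s ^ (DIM('a) - 1))"
  proof -
    obtain n where "DIM('a) = Suc n"
      using DIM_positive by (metis Suc_pred)
    then show ?thesis
      using s by (simp add: ennreal_mult[symmetric])
  qed
  ultimately show ?thesis
    by (simp add: mult.assoc[symmetric] mult.commute)
qed

lemma nn_integral_unit_shell_weight:
  fixes x :: "'a::real_normed_vector"
  assumes "x \<noteq> 0"
  shows "(\<integral>\<^sup>+ s. ennreal (1 / s) * indicator {0<..} s * indicator unit_shell ((1 / s) *\<^sub>R x) \<partial>lborel)
       = ennreal (ln 2)"
proof -
  have "indicator {0<..} s * indicator unit_shell ((1 / s) *\<^sub>R x)
      = (indicator {norm x / 2..norm x} s :: ennreal)" for s :: real
  proof (cases "0 < s")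
    case True
    then have "(1 / s) *\<^sub>R x \<in> unit_shell \<longleftrightarrow> s \<in> {norm x / 2..norm x}"
      by (auto simp: unit_shell_def field_simps)
    with True show ?thesis
      by (simp split: split_indicator)
  next
    case False
    moreover have "0 < norm x"
      using assms by simp
    ultimately have "s \<notin> {norm x / 2..norm x}"
      by (simp only: atLeastAtMost_iff) linarith
    with False show ?thesis
      by simp
  qed
  then show ?thesis
    using assms by (simp add: mult.assoc nn_integral_inverse_over_half)
qed

text \<open>A substitute for polar coordinates: every \<open>x \<noteq> 0\<close> lies on the ray through \<open>y\<close>
  at parameter \<open>s\<close> with \<open>y\<close> in the unit shell exactly for \<open>s \<in> [norm x / 2, norm x]\<close>,
  a range of logarithmic length \<open>ln 2\<close>.\<close>

lemma nn_integral_unit_shell_rays: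
  fixes f :: "'a::euclidean_space \<Rightarrow> ennreal"
  assumes [measurable]: "f \<in> borel_measurable borel"
  shows "(\<integral>\<^sup>+ y. indicator unit_shell y
            * (\<integral>\<^sup>+ s. f (s *\<^sub>R y) * ennreal (s ^ (DIM('a) - 1)) * indicator {0<..} s \<partial>lborel) \<partial>lborel)
       = ennreal (ln 2) * (\<integral>\<^sup>+ x. f x \<partial>lborel)"
proof -
  have "(\<integral>\<^sup>+ y. indicator unit_shell y
            * (\<integral>\<^sup>+ s. f (s *\<^sub>R y) * ennreal (s ^ (DIM('a) - 1)) * indicator {0<..} s \<partial>lborel) \<partial>lborel)
      = (\<integral>\<^sup>+ y. (\<integral>\<^sup>+ s. indicator unit_shell y * (f (s *\<^sub>R y) * ennreal (s ^ (DIM('a) - 1)) * indicator {0<..} s) \<partial>lborel) \<partial>lborel)"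
    by (intro nn_integral_cong) (simp add: nn_integral_cmult)
  also have "\<dots> = (\<integral>\<^sup>+ s. (\<integral>\<^sup>+ y. indicator unit_shell y * (f (s *\<^sub>R y) * ennreal (s ^ (DIM('a) - 1)) * indicator {0<..} s) \<partial>lborel) \<partial>lborel)"
    by (rule lborel_pair.Fubini'[symmetric]) measurable
  also have "\<dots> = (\<integral>\<^sup>+ s. (\<integral>\<^sup>+ x. ennreal (1 / s) * indicator {0<..} s * indicator unit_shell ((1 / s) *\<^sub>R x) * f x \<partial>lborel) \<partial>lborel)"
  proof (rule nn_integral_cong)
    fix s :: real
    show "(\<integral>\<^sup>+ y. indicator unit_shell y * (f (s *\<^sub>R y) * ennreal (s ^ (DIM('a) - 1)) * indicator {0<..} s) \<partial>lborel)
        = (\<integral>\<^sup>+ x. ennreal (1 / s) * indicator {0<..} s * indicator unit_shell ((1 / s) *\<^sub>R x) * f x \<partial>lborel)"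
    proof (cases "0 < s")
      case True
      then show ?thesis
        using nn_integral_dilate_indicator[of f unit_shell s]
        by (simp add: nn_integral_multc[symmetric] nn_integral_cmult[symmetric] mult_ac)
    qed simp
  qed
  also have "\<dots> = (\<integral>\<^sup>+ x. (\<integral>\<^sup>+ s. ennreal (1 / s) * indicator {0<..} s * indicator unit_shell ((1 / s) *\<^sub>R x) \<partial>lborel) * f x \<partial>lborel)"
    by (subst lborel_pair.Fubini') (simp_all add: nn_integral_multc)
  also have "\<dots> = (\<integral>\<^sup>+ x. ennreal (ln 2) * f x \<partial>lborel)"
    using AE_lborel_singleton[of 0]
    by (intro nn_integral_cong_AE) (auto elim!: eventually_mono simp: nn_integral_unit_shell_weight)
  also have "\<dots> = ennreal (ln 2) * (\<integral>\<^sup>+ x. f x \<partial>lborel)"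
    by (rule nn_integral_cmult) measurable
  finally show ?thesis .
qed

lemma nn_integral_ray_cball:
  fixes y :: "real^3"
  assumes "y \<noteq> 0"
  shows "(\<integral>\<^sup>+ s. indicator (cball 0 1) (s *\<^sub>R y) * ennreal (s ^ 2) * indicator {0<..} s \<partial>lborel)
       = ennreal (1 / norm y ^ 3 / 3)"
proof -
  have "indicator (cball 0 1) (s *\<^sub>R y) * ennreal (s ^ 2) * indicator {0<..} s
      = ennreal (s ^ 2) * indicator {0..1 / norm y} s" for s
    using assms by (cases "0 < s"; cases "s = 0") (auto simp: field_simps split: split_indicator)
  then have "(\<integral>\<^sup>+ s. indicator (cball 0 1) (s *\<^sub>R y) * ennreal (s ^ 2) * indicator {0<..} s \<partial>lborel)
      = ennreal ((1 / norm y) ^ 3 / 3 - 0 ^ 3 / 3)"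
    by (simp only:) (rule nn_integral_FTC_Icc;
        use assms in \<open>auto intro!: derivative_eq_intros simp: power2_eq_square\<close>)
  then show ?thesis
    by (simp add: power_divide)
qed

lemma nn_integral_unit_shell_inverse_cube:
  "(\<integral>\<^sup>+ y. indicator unit_shell y * ennreal (1 / norm y ^ 3) \<partial>(lborel :: (real^3) measure))
     = ennreal (4 * pi * ln 2)"
proof -
  have "(\<integral>\<^sup>+ y. indicator unit_shell y * ennreal (1 / norm y ^ 3 / 3) \<partial>(lborel :: (real^3) measure))
      = (\<integral>\<^sup>+ y. indicator unit_shell y
          * (\<integral>\<^sup>+ s. indicator (cball 0 1) (s *\<^sub>R y) * ennreal (s ^ (DIM(real^3) - 1)) * indicator {0<..} s \<partial>lborel)
         \<partial>(lborel :: (real^3) measure))"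
  proof (rule nn_integral_cong)
    fix y :: "real^3"
    show "indicator unit_shell y * ennreal (1 / norm y ^ 3 / 3)
        = indicator unit_shell y * (\<integral>\<^sup>+ s. indicator (cball 0 1) (s *\<^sub>R y) * ennreal (s ^ (DIM(real^3) - 1)) * indicator {0<..} s \<partial>lborel)"
    proof (cases "y \<in> unit_shell")
      case True
      then have "y \<noteq> 0"
        by (auto simp: unit_shell_def)
      with True show ?thesis
        using nn_integral_ray_cball[of y] by auto
    qed simp
  qed
  also have "\<dots> = ennreal (ln 2) * (\<integral>\<^sup>+ x. indicator (cball (0 :: real^3) 1) x \<partial>lborel)"
    by (rule nn_integral_unit_shell_rays) (intro borel_measurable_indicator borel_closed closed_cball)
  also have "\<dots> = ennreal (ln 2 * (4 * pi / 3))"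
    by (simp add: emeasure_cball eval_unit_ball_vol ennreal_mult[symmetric])
  finally have shell: "(\<integral>\<^sup>+ y. indicator unit_shell y * ennreal (1 / norm y ^ 3 / 3) \<partial>(lborel :: (real^3) measure))
      = ennreal (ln 2 * (4 * pi / 3))" .
  have "indicator unit_shell y * ennreal (1 / norm y ^ 3)
      = ennreal 3 * (indicator unit_shell y * ennreal (1 / norm y ^ 3 / 3))" for y :: "real^3"
  proof -
    have "ennreal 3 * ennreal (1 / norm y ^ 3 / 3) = ennreal (1 / norm y ^ 3)"
      by (subst ennreal_mult[symmetric]) auto
    then show ?thesis
      by (metis mult.left_commute)
  qed
  then have "(\<integral>\<^sup>+ y. indicator unit_shell y * ennreal (1 / norm y ^ 3) \<partial>(lborel :: (real^3) measure))
      = ennreal 3 * ennreal (ln 2 * (4 * pi / 3))"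
    using shell by (simp add: nn_integral_cmult)
  also have "\<dots> = ennreal (4 * pi * ln 2)"
    by (subst ennreal_mult[symmetric]) auto
  finally show ?thesis .
qed

section \<open>The transport kernel\<close>

lemma optical_path_commute: "optical_path \<sigma> r r' = optical_path \<sigma> r' r"
proof -
  have reflect: "indicator {0..1} (1 + (-1) * t) *\<^sub>R \<sigma> (r + (1 + (-1) * t) *\<^sub>R (r' - r))
      = indicator {0..1} t *\<^sub>R \<sigma> (r' + t *\<^sub>R (r - r'))" for t :: real
  proof -
    have "r + (1 + (-1) * t) *\<^sub>R (r' - r) = r' + t *\<^sub>R (r - r')"
      by (simp add: algebra_simps)
    moreover have "1 + (-1) * t \<in> {0..1} \<longleftrightarrow> t \<in> {0..1}"
      by auto
    ultimately show ?thesis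
      by (simp split: split_indicator)
  qed
  have "(\<integral> t. indicator {0..1} t *\<^sub>R \<sigma> (r + t *\<^sub>R (r' - r)) \<partial>lborel)
      = \<bar>-1\<bar> *\<^sub>R (\<integral> t. indicator {0..1} (1 + (-1) * t) *\<^sub>R \<sigma> (r + (1 + (-1) * t) *\<^sub>R (r' - r)) \<partial>lborel)"
    by (rule lborel_integral_real_affine) simp
  then show ?thesis
    unfolding optical_path_def set_lebesgue_integral_def reflect by (simp add: norm_minus_commute)
qed

lemma transport_kernel_commute: "transport_kernel \<sigma> r r' = transport_kernel \<sigma> r' r"
  unfolding transport_kernel_def using optical_path_commute[of \<sigma> r r'] by (simp add: norm_minus_commute)

lemma transport_kernel_nonneg: "0 \<le> transport_kernel \<sigma> r r'"
  unfolding transport_kernel_def by simp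

lemma transport_kernel_cong:
  assumes "convex V" "r \<in> V" "r' \<in> V" "\<And>x. x \<in> V \<Longrightarrow> \<sigma>\<^sub>1 x = \<sigma>\<^sub>2 x"
  shows "transport_kernel \<sigma>\<^sub>1 r r' = transport_kernel \<sigma>\<^sub>2 r r'"
proof -
  have segment: "indicator {0..1} t *\<^sub>R \<sigma>\<^sub>1 (r + t *\<^sub>R (r' - r)) = indicator {0..1} t *\<^sub>R \<sigma>\<^sub>2 (r + t *\<^sub>R (r' - r))"
    for t :: real
  proof (cases "t \<in> {0..1}")
    case True
    have "r + t *\<^sub>R (r' - r) = (1 - t) *\<^sub>R r + t *\<^sub>R r'"
      by (simp add: algebra_simps)
    also have "\<dots> \<in> V"
      using assms(1-3) True unfolding convex_def by auto
    finally show ?thesis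
      using assms(4) by simp
  qed simp
  have "(LINT t:{0..1}|lborel. \<sigma>\<^sub>1 (r + t *\<^sub>R (r' - r))) = (LINT t:{0..1}|lborel. \<sigma>\<^sub>2 (r + t *\<^sub>R (r' - r)))"
    unfolding set_lebesgue_integral_def segment ..
  then show ?thesis
    unfolding transport_kernel_def optical_path_def by simp
qed

lemma borel_measurable_optical_path:
  assumes [measurable]: "\<sigma> \<in> borel_measurable borel"
  shows "(\<lambda>(r, r'). optical_path \<sigma> r r') \<in> borel_measurable (borel \<Otimes>\<^sub>M borel)"
proof -
  have "(\<lambda>q::((real^3) \<times> (real^3)) \<times> real. indicator {0..1} (snd q) *\<^sub>R \<sigma> (fst (fst q) + snd q *\<^sub>R (snd (fst q) - fst (fst q))))
      \<in> borel_measurable ((borel \<Otimes>\<^sub>M borel) \<Otimes>\<^sub>M borel)"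
    by measurable
  then have "(\<lambda>(p, t). indicator {0..1} t *\<^sub>R \<sigma> (fst p + t *\<^sub>R (snd p - fst p)))
      \<in> borel_measurable ((borel \<Otimes>\<^sub>M borel) \<Otimes>\<^sub>M lborel)"
    by (subst measurable_cong_sets[OF sets_pair_measure_cong[OF refl sets_lborel] refl])
       (simp add: case_prod_beta)
  then have "(\<lambda>p. LINT t:{0..1}|lborel. \<sigma> (fst p + t *\<^sub>R (snd p - fst p))) \<in> borel_measurable (borel \<Otimes>\<^sub>M borel)"
    unfolding set_lebesgue_integral_def by (rule lborel.borel_measurable_lebesgue_integral)
  then show ?thesis
    unfolding optical_path_def case_prod_beta by measurable
qed

lemma borel_measurable_transport_kernel:
  assumes "\<sigma> \<in> borel_measurable borel"
  shows "(\<lambda>(r, r'). transport_kernel \<sigma> r r') \<in> borel_measurable (borel \<Otimes>\<^sub>M borel)"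
  using borel_measurable_optical_path[OF assms] unfolding transport_kernel_def case_prod_beta by measurable

lemma optical_path_ray:
  assumes "0 < s"
  shows "optical_path \<sigma> r (r + s *\<^sub>R y) = norm y * (LINT u:{0..s}|lborel. \<sigma> (r + u *\<^sub>R y))"
proof -
  have "(\<integral> u. indicator {0..s} u *\<^sub>R \<sigma> (r + u *\<^sub>R y) \<partial>lborel)
      = \<bar>s\<bar> *\<^sub>R (\<integral> t. indicator {0..s} (0 + s * t) *\<^sub>R \<sigma> (r + (0 + s * t) *\<^sub>R y) \<partial>lborel)"
    using assms by (intro lborel_integral_real_affine) simp
  also have "(\<lambda>t. indicator {0..s} (0 + s * t) *\<^sub>R \<sigma> (r + (0 + s * t) *\<^sub>R y))
      = (\<lambda>t. indicator {0..1} t *\<^sub>R \<sigma> (r + t *\<^sub>R (r + s *\<^sub>R y - r)))"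
    using assms by (auto simp: zero_le_mult_iff mult.commute split: split_indicator)
  finally show ?thesis
    using assms unfolding optical_path_def set_lebesgue_integral_def by simp
qed

locale bounded_cross_section =
  fixes \<sigma> :: "real^3 \<Rightarrow> real" and B :: real
  assumes cross_section_measurable [measurable]: "\<sigma> \<in> borel_measurable borel"
    and cross_section_nonneg: "0 \<le> \<sigma> x"
    and cross_section_le: "\<sigma> x \<le> B"
begin

lemma borel_measurable_transport_kernel_at [measurable]:
  "transport_kernel \<sigma> r \<in> borel_measurable borel"
  using measurable_compose[OF measurable_Pair1'[of r borel] borel_measurable_transport_kernel[of \<sigma>]]
  by simp

lemma nn_integral_transport_kernel_ray_le:
  assumes "y \<noteq> 0"
  shows "(\<integral>\<^sup>+ s. ennreal (transport_kernel \<sigma> r (r + s *\<^sub>R y) * \<sigma> (r + s *\<^sub>R y)) * ennreal (s ^ 2) * indicator {0<..} s \<partial>lborel)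
       \<le> ennreal (1 / (4 * pi * norm y ^ 3))"
proof -
  define \<psi> where "\<psi> u = \<sigma> (r + u *\<^sub>R y)" for u
  interpret ray: bounded_rate \<psi> B
    by unfold_locales (simp_all add: \<psi>_def[abs_def] cross_section_nonneg cross_section_le)
  let ?c = "ennreal (1 / (4 * pi * norm y ^ 2))"
  have "ennreal (transport_kernel \<sigma> r (r + s *\<^sub>R y) * \<sigma> (r + s *\<^sub>R y)) * ennreal (s ^ 2) * indicator {0<..} s
      = ennreal (\<psi> s * exp (- norm y * ray.primitive s)) * indicator {0<..} s * ?c" for s
  proof (cases "0 < s")
    case True
    then have "transport_kernel \<sigma> r (r + s *\<^sub>R y) * \<sigma> (r + s *\<^sub>R y) * s ^ 2
        = \<psi> s * exp (- norm y * ray.primitive s) * (1 / (4 * pi * norm y ^ 2))"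
      using assms unfolding transport_kernel_def optical_path_ray[OF True] ray.primitive_def \<psi>_def
      by (simp add: field_simps power2_eq_square)
    with True show ?thesis
      using cross_section_nonneg ray.rate_nonneg transport_kernel_nonneg[of \<sigma> r]
      by (simp add: ennreal_mult[symmetric] mult.assoc)
  qed simp
  then have "(\<integral>\<^sup>+ s. ennreal (transport_kernel \<sigma> r (r + s *\<^sub>R y) * \<sigma> (r + s *\<^sub>R y)) * ennreal (s ^ 2) * indicator {0<..} s \<partial>lborel)
      = (\<integral>\<^sup>+ s. ennreal (\<psi> s * exp (- norm y * ray.primitive s)) * indicator {0<..} s \<partial>lborel) * ?c"
    by (simp add: nn_integral_multc)
  also have "\<dots> \<le> ennreal (1 / norm y) * ?c"
    using assms by (intro mult_right_mono ray.nn_integral_rate_exp_primitive_le) simp_all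
  also have "\<dots> = ennreal (1 / (4 * pi * norm y ^ 3))"
    using assms by (simp add: ennreal_mult[symmetric] power3_eq_cube power2_eq_square)
  finally show ?thesis .
qed

text \<open>Averaging the ray integrals around \<open>r\<close> over the unit
  shell turns the angular integral into the integral of \<open>1 / norm y ^ 3\<close>, whose value
  \<open>4 pi ln 2\<close> exactly cancels the factors \<open>ln 2\<close> and \<open>1 / (4 pi)\<close>.\<close>

lemma nn_integral_transport_kernel_le_1:
  "(\<integral>\<^sup>+ r'. ennreal (transport_kernel \<sigma> r r' * \<sigma> r') \<partial>lborel) \<le> 1"
proof -
  define f where "f x = ennreal (transport_kernel \<sigma> r (r + x) * \<sigma> (r + x))" for x
  have [measurable]: "f \<in> borel_measurable borel"
    unfolding f_def by measurable
  have "ennreal (ln 2) * (\<integral>\<^sup>+ r'. ennreal (transport_kernel \<sigma> r r' * \<sigma> r') \<partial>lborel)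
      = ennreal (ln 2) * (\<integral>\<^sup>+ x. f x \<partial>lborel)"
  proof -
    have "(\<integral>\<^sup>+ r'. ennreal (transport_kernel \<sigma> r r' * \<sigma> r') \<partial>lborel)
        = (\<integral>\<^sup>+ r'. ennreal (transport_kernel \<sigma> r r' * \<sigma> r') \<partial>distr lborel borel ((+) r))"
      by (simp add: lborel_distr_plus)
    then show ?thesis
      unfolding f_def by (subst (asm) nn_integral_distr) auto
  qed
  also have "\<dots> = (\<integral>\<^sup>+ y. indicator unit_shell y
          * (\<integral>\<^sup>+ s. f (s *\<^sub>R y) * ennreal (s ^ (DIM(real^3) - 1)) * indicator {0<..} s \<partial>lborel) \<partial>lborel)"
    by (rule nn_integral_unit_shell_rays[symmetric]) measurable
  also have "\<dots> \<le> (\<integral>\<^sup>+ y. ennreal (1 / (4 * pi)) * (indicator unit_shell y * ennreal (1 / norm y ^ 3))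
      \<partial>(lborel :: (real^3) measure))"
  proof (rule nn_integral_mono)
    fix y :: "real^3"
    have "y \<in> unit_shell \<Longrightarrow> y \<noteq> 0"
      by (auto simp: unit_shell_def)
    then show "indicator unit_shell y * (\<integral>\<^sup>+ s. f (s *\<^sub>R y) * ennreal (s ^ (DIM(real^3) - 1)) * indicator {0<..} s \<partial>lborel)
        \<le> ennreal (1 / (4 * pi)) * (indicator unit_shell y * ennreal (1 / norm y ^ 3))"
      using nn_integral_transport_kernel_ray_le[of y r]
      by (auto simp: f_def ennreal_mult[symmetric] split: split_indicator)
  qed
  also have "\<dots> = ennreal (ln 2) * 1"
    by (simp add: nn_integral_cmult nn_integral_unit_shell_inverse_cube ennreal_mult[symmetric])
  finally show ?thesis
    by (subst (asm) ennreal_mult_le_mult_iff) auto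
qed

sublocale schur_kernel lborel "transport_kernel \<sigma>" \<sigma>
proof
  have "(\<lambda>(r, r'). transport_kernel \<sigma> r r') \<in> borel_measurable (borel \<Otimes>\<^sub>M borel)"
    by (rule borel_measurable_transport_kernel) measurable
  then show "(\<lambda>(r, r'). transport_kernel \<sigma> r r') \<in> borel_measurable (lborel \<Otimes>\<^sub>M lborel)"
    by (subst measurable_cong_sets[OF sets_pair_measure_cong[OF sets_lborel sets_lborel] refl])
qed (simp_all add: transport_kernel_nonneg cross_section_nonneg transport_kernel_commute
      nn_integral_transport_kernel_le_1)

end

section \<open>The operator \<open>L\<close> on \<open>L\<^sup>2(V)\<close>\<close>

lemma in_L2_borel_representative:
  assumes "V \<in> sets lebesgue" "in_L2 V g"
  obtains g' where "g' \<in> borel_measurable lborel" "AE x in lebesgue. indicator V x * g x = g' x"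
    and "integrable lborel (\<lambda>x. (g' x)\<^sup>2)"
proof -
  have gV [measurable]: "(\<lambda>x. indicator V x * g x) \<in> borel_measurable lebesgue"
    using assms unfolding in_L2_def by (subst (asm) borel_measurable_restrict_space_iff) auto
  then obtain g' where g': "g' \<in> borel_measurable lborel" "AE x in lborel. indicator V x * g x = g' x"
    using completion_ex_borel_measurable_real by blast
  have ae: "AE x in lebesgue. indicator V x * g x = g' x"
    using g'(2) by (rule AE_completion)
  have "integrable lebesgue (\<lambda>x. (indicator V x * g x)\<^sup>2)"
  proof -
    have "indicator V x *\<^sub>R (g x)\<^sup>2 = (indicator V x * g x)\<^sup>2" for x
      by (simp split: split_indicator)
    then show ?thesis
      using assms unfolding in_L2_def set_integrable_def by simp
  qed
  moreover have "(\<lambda>x. (g' x)\<^sup>2) \<in> borel_measurable lebesgue"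
    using g'(1) by (intro measurable_completion borel_measurable_power)
  ultimately have "integrable lebesgue (\<lambda>x. (g' x)\<^sup>2)"
    using ae by (subst (asm) integrable_cong_AE) (auto elim: AE_mp)
  then have "integrable lborel (\<lambda>x. (g' x)\<^sup>2)"
    using g' by (subst (asm) integrable_completion) auto
  with g' ae show ?thesis
    using that by blast
qed

lemma L2_inner_eq_integral:
  assumes [measurable]: "f' \<in> borel_measurable lborel" "g' \<in> borel_measurable lborel"
    and f: "AE x in lebesgue. indicator V x * f x = f' x"
    and g: "AE x in lebesgue. indicator V x * g x = g' x"
  shows "L2_inner V f g = (\<integral> x. f' x * g' x \<partial>lborel)"
proof -
  have "L2_inner V f g = (\<integral> x. (indicator V x * f x) * (indicator V x * g x) \<partial>lebesgue)"
    unfolding L2_inner_def set_lebesgue_integral_def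
    by (intro Bochner_Integration.integral_cong) (auto split: split_indicator)
  also have "\<dots> = (\<integral> x. f' x * g' x \<partial>lebesgue)"
  proof (rule integral_cong_AE)
    show ae: "AE x in lebesgue. (indicator V x * f x) * (indicator V x * g x) = f' x * g' x"
      using f g by eventually_elim simp
    show "(\<lambda>x. f' x * g' x) \<in> borel_measurable lebesgue"
      by (intro measurable_completion) measurable
    then show "(\<lambda>x. (indicator V x * f x) * (indicator V x * g x)) \<in> borel_measurable lebesgue"
      by (rule borel_measurable_AE) (use ae in \<open>auto elim: AE_mp\<close>)
  qed
  also have "\<dots> = (\<integral> x. f' x * g' x \<partial>lborel)"
    by (rule integral_completion) measurable
  finally show ?thesis .
qed

lemma L2_norm_square: "(L2_norm V f)\<^sup>2 = L2_inner V f f"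
proof -
  have "0 \<le> (LINT r:V|lebesgue. (f r)\<^sup>2)"
    unfolding set_lebesgue_integral_def by (intro Bochner_Integration.integral_nonneg) simp
  then show ?thesis
    unfolding L2_norm_def L2_inner_def by (simp add: power2_eq_square)
qed

locale transport_domain =
  fixes V :: "(real^3) set" and \<sigma> :: "real^3 \<Rightarrow> real" and \<sigma>max :: real
  assumes domain_borel [measurable]: "V \<in> sets borel"
    and domain_convex: "convex V"
    and cross_section_measurable_on: "\<sigma> \<in> borel_measurable (restrict_space borel V)"
    and cross_section_nonneg_on: "r \<in> V \<Longrightarrow> 0 \<le> \<sigma> r"
    and cross_section_le_on: "r \<in> V \<Longrightarrow> \<sigma> r \<le> \<sigma>max"
begin

text \<open>Extending \<open>\<sigma>\<close> by zero makes the Schur operator vanish outside \<open>V\<close> and restricts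
  its integrals to \<open>V\<close>; by convexity this does not change the kernel on \<open>V \<times> V\<close>.\<close>

definition cross_section_ext :: "real^3 \<Rightarrow> real" where
  "cross_section_ext x = indicator V x * \<sigma> x"

sublocale ext: bounded_cross_section cross_section_ext "max \<sigma>max 0"
proof
  show "cross_section_ext \<in> borel_measurable borel"
    using cross_section_measurable_on unfolding cross_section_ext_def[abs_def]
    by (subst (asm) borel_measurable_restrict_space_iff) auto
qed (auto simp: cross_section_ext_def cross_section_nonneg_on cross_section_le_on le_max_iff_disj
    split: split_indicator)

lemma indicator_mult_L_op:
  assumes [measurable]: "f' \<in> borel_measurable lborel"
    and f: "AE x in lebesgue. indicator V x * f x = f' x"
  shows "indicator V r * L_op V \<sigma> f r = ext.schur_op f' r"
proof (cases "r \<in> V")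
  case r: True
  have "K_op V \<sigma> (\<lambda>r'. sqrt (\<sigma> r') * f r') r
      = (\<integral> r'. transport_kernel cross_section_ext r r' * (sqrt (cross_section_ext r') * (indicator V r' * f r')) \<partial>lebesgue)"
    unfolding K_op_def set_lebesgue_integral_def
    using r transport_kernel_cong[OF domain_convex r, of _ \<sigma> cross_section_ext]
    by (intro Bochner_Integration.integral_cong) (auto simp: cross_section_ext_def split: split_indicator)
  also have "\<dots> = (\<integral> r'. transport_kernel cross_section_ext r r' * (sqrt (cross_section_ext r') * f' r') \<partial>lebesgue)"
  proof (rule integral_cong_AE)
    show ae: "AE r' in lebesgue. transport_kernel cross_section_ext r r' * (sqrt (cross_section_ext r') * (indicator V r' * f r'))
        = transport_kernel cross_section_ext r r' * (sqrt (cross_section_ext r') * f' r')"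
      using f by eventually_elim simp
    show "(\<lambda>r'. transport_kernel cross_section_ext r r' * (sqrt (cross_section_ext r') * f' r')) \<in> borel_measurable lebesgue"
      by (intro measurable_completion) measurable
    then show "(\<lambda>r'. transport_kernel cross_section_ext r r' * (sqrt (cross_section_ext r') * (indicator V r' * f r')))
        \<in> borel_measurable lebesgue"
      by (rule borel_measurable_AE) (use ae in \<open>auto elim: AE_mp\<close>)
  qed
  also have "\<dots> = (\<integral> r'. transport_kernel cross_section_ext r r' * (sqrt (cross_section_ext r') * f' r') \<partial>lborel)"
    by (rule integral_completion) measurable
  finally show ?thesis
    using r unfolding L_op_def ext.schur_op_def by (simp add: cross_section_ext_def)
qed (simp add: ext.schur_op_def cross_section_ext_def)

end

theorem lemma4:
  fixes V :: "(real^3) set" and \<sigma> :: "real^3 \<Rightarrow> real" and \<sigma>min \<sigma>max :: real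
    and g :: "real^3 \<Rightarrow> real"
  assumes "open V" and "convex V" and "bounded V" and "V \<noteq> {}"
    and "\<sigma> \<in> borel_measurable (restrict_space borel V)"
    and "0 < \<sigma>min" and "\<And>r. r \<in> V \<Longrightarrow> \<sigma>min \<le> \<sigma> r \<and> \<sigma> r \<le> \<sigma>max"
    and "in_L2 V g"
  shows "(L2_norm V (L_op V \<sigma> g))\<^sup>2 = L2_inner V g (L_op V \<sigma> (L_op V \<sigma> g))
       \<and> L2_inner V g (L_op V \<sigma> (L_op V \<sigma> g)) \<le> (L2_norm V g)\<^sup>2"
proof -
  interpret transport_domain V \<sigma> \<sigma>max
    using assms(1,2,5-7) by unfold_locales (auto intro: borel_open order_trans[of 0 \<sigma>min, OF less_imp_le])
  obtain g' where g' [measurable]: "g' \<in> borel_measurable lborel"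
    and g'_ae: "AE x in lebesgue. indicator V x * g x = g' x"
    and g'_sq: "integrable lborel (\<lambda>x. (g' x)\<^sup>2)"
    using in_L2_borel_representative[OF _ assms(8)] assms(1) by (auto intro: borel_open)
  let ?h = "ext.schur_op g'"
  have Lg: "AE x in lebesgue. indicator V x * L_op V \<sigma> g x = ?h x"
    using indicator_mult_L_op[OF g' g'_ae] by simp
  have LLg: "AE x in lebesgue. indicator V x * L_op V \<sigma> (L_op V \<sigma> g) x = ext.schur_op ?h x"
    using indicator_mult_L_op[OF _ Lg] by simp
  have "(L2_norm V (L_op V \<sigma> g))\<^sup>2 = (\<integral> x. (?h x)\<^sup>2 \<partial>lborel)"
    unfolding L2_norm_square using L2_inner_eq_integral[OF _ _ Lg Lg] by (simp add: power2_eq_square)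
  moreover have "L2_inner V g (L_op V \<sigma> (L_op V \<sigma> g)) = (\<integral> x. g' x * ext.schur_op ?h x \<partial>lborel)"
    using L2_inner_eq_integral[OF _ _ g'_ae LLg] by simp
  moreover have "(L2_norm V g)\<^sup>2 = (\<integral> x. (g' x)\<^sup>2 \<partial>lborel)"
    unfolding L2_norm_square using L2_inner_eq_integral[OF _ _ g'_ae g'_ae] by (simp add: power2_eq_square)
  ultimately show ?thesis
    using ext.integral_schur_op_square[OF g' g'_sq] ext.integral_schur_op_square_le[OF g' g'_sq] by simp
qed

end
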